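(* As $k$ ranges over $\mathbb{Z}$, the Eells–Kuiper invariant $\mu(Q^{15}_k)$, regarded as the (unordered) pair of values $\frac{k(k+1)}{2^{8}\cdot127}\pm\frac{2k+1}{2^{9}}\mod 1$ corresponding to the two spin structures of $Q^{15}_k$, takes exactly 4096 different pairs of values.
   Context: $Q^{15}_k=M^{15}_k/\tau$ is the Shimada projective space: $M^{15}_k$ is the Shimada sphere $D^8\times S^7\sqcup D^8\times S^7/\sim$ glued along $S^7\times S^7$ via $f(x)(y)=x^{k+1}yx^{-k}$ (octonion multiplication), and $\tau$ is the free involution induced by $(x,y)\mapsto(x,-y)$. Its Eells–Kuiper invariant for its two spin structures is $\frac{k(k+1)}{2^8\cdot127}\pm\frac{2k+1}{2^9}\mod1$. *)

theory Defs
  imports Complex_Main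
begin

text \<open>Eells--Kuiper invariant of the Shimada projective space Q^15_k, as given in the
  paper: for the two spin structures it equals
  k(k+1)/(2^8 * 127) +- (2k+1)/2^9  mod 1.
  Values mod 1 are represented by their representatives in [0,1) (via frac);
  the invariant is the unordered pair, i.e. the set of the two values.\<close>

definition EK_value :: "int \<Rightarrow> bool \<Rightarrow> rat" where
  "EK_value k s = frac (of_int (k * (k + 1)) / (2^8 * 127)
                        + (if s then 1 else -1) * of_int (2 * k + 1) / 2^9)"

definition EK_pair :: "int \<Rightarrow> rat set" where
  "EK_pair k = {EK_value k True, EK_value k False}"

end

theory Submission
  imports Defs "HOL-Number_Theory.Cong"
begin

text \<open>Over the common denominator 2^9 * 127 the two values of the invariant are
  (2 m^2 - 8065) / 65024 mod 1 with m = k + 64 and m = k - 63 respectively. Such a value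
  determines m^2 mod 127 and m^2 mod 256; as m - 127 is congruent to m mod 127 and to m + 1
  mod 128, the unordered pair is thus determined by, and determines, m^2 mod 127 together
  with the unordered pair of m^2 and (m + 1)^2 mod 256, where m = k + 64. By the Chinese
  remainder theorem these two components vary independently, over the 64 squares mod 127
  and over 64 pairs mod 256 respectively, giving 64 * 64 = 4096 values.\<close>

lemma frac_eq_iff_diff_in_Ints: "frac x = frac y \<longleftrightarrow> x - y \<in> \<int>"
proof
  assume "frac x = frac y"
  then obtain n where "x = y + of_int n" by (rule frac_eqE)
  then show "x - y \<in> \<int>" by simp
next
  assume "x - y \<in> \<int>"
  then have "frac (y + (x - y)) = frac y" by (rule frac_add_int_right)
  then show "frac x = frac y" by simp
qed

lemma frac_of_int_div_eq_iff_cong: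
  fixes a b n :: int
  assumes "n \<noteq> 0"
  shows "frac (of_int a / of_int n :: 'a :: floor_ceiling) = frac (of_int b / of_int n)
           \<longleftrightarrow> [a = b] (mod n)"
proof -
  have "(of_int a / of_int n :: 'a) - of_int b / of_int n = of_int (a - b) / of_int n"
    by (simp add: diff_divide_distrib)
  then show ?thesis
    using assms of_int_div_of_int_in_Ints_iff[of "a - b" n, where 'a = 'a]
    by (simp only: frac_eq_iff_diff_in_Ints cong_iff_dvd_diff) simp
qed

lemma cong_square_double_modulus:
  fixes x y c :: int
  assumes "[x = y] (mod 2 * c)"
  shows "[x^2 = y^2] (mod 4 * c)"
proof -
  obtain t where "x - y = 2 * c * t" using assms by (auto simp: cong_iff_dvd_diff)
  then have "x = y + 2 * c * t" by simp
  then have "x^2 - y^2 = 4 * c * (t * y + c * t^2)"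
    by (simp add: power2_eq_square algebra_simps)
  then show ?thesis by (simp add: cong_iff_dvd_diff)
qed

definition sq_frac :: "int \<Rightarrow> rat" where
  "sq_frac m = frac (of_int (2 * m^2 - 8065) / 65024)"

lemma EK_value_True: "EK_value k True = sq_frac (k + 64)"
  unfolding EK_value_def sq_frac_def
  by (rule arg_cong[where f = frac]) (simp add: field_simps power2_eq_square)

lemma EK_value_False: "EK_value k False = sq_frac (k + 64 - 127)"
  unfolding EK_value_def sq_frac_def
  by (rule arg_cong[where f = frac]) (simp add: field_simps power2_eq_square)

lemma sq_frac_eq_iff:
  "sq_frac x = sq_frac y \<longleftrightarrow> [x^2 = y^2] (mod 127) \<and> [x^2 = y^2] (mod 256)"
proof -
  have "sq_frac x = sq_frac y \<longleftrightarrow> [2 * x^2 - 8065 = 2 * y^2 - 8065] (mod 65024)"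
    unfolding sq_frac_def
    by (rule frac_of_int_div_eq_iff_cong[where n = 65024, unfolded of_int_numeral]) simp
  also have "\<dots> \<longleftrightarrow> 2 * 32512 dvd 2 * (x^2 - y^2)"
    by (simp add: cong_iff_dvd_diff right_diff_distrib)
  also have "\<dots> \<longleftrightarrow> [x^2 = y^2] (mod 127 * 256)"
    by (simp only: dvd_times_left_cancel_iff cong_iff_dvd_diff) simp
  also have "\<dots> \<longleftrightarrow> [x^2 = y^2] (mod 127) \<and> [x^2 = y^2] (mod 256)"
    using coprime_cong_mult[of "x^2" "y^2" 127 256] cong_modulus_mult[of "x^2" "y^2" 127 256]
      cong_modulus_mult[of "x^2" "y^2" 256 127]
    by (auto simp: coprime_iff_gcd_eq_1 gcd_non_0_int mult.commute)
  finally show ?thesis .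
qed

definition square_class :: "int \<Rightarrow> int \<times> int set" where
  "square_class m = (m^2 mod 127, {m^2 mod 256, (m + 1)^2 mod 256})"

lemma sq_frac_pair_eq_iff:
  "{sq_frac m, sq_frac (m - 127)} = {sq_frac n, sq_frac (n - 127)}
     \<longleftrightarrow> square_class m = square_class n"
proof -
  have shift_127: "(m - 127)^2 mod 127 = m^2 mod 127" for m :: int
    using cong_pow[of "m - 127" m 127 2] by (simp add: cong_def)
  have shift_256: "(m - 127)^2 mod 256 = (m + 1)^2 mod 256" for m :: int
  proof -
    have "[m - 127 = m + 1] (mod 2 * 64)" by (simp add: cong_iff_dvd_diff)
    then have "[(m - 127)^2 = (m + 1)^2] (mod 4 * 64)" by (rule cong_square_double_modulus)
    then show ?thesis by (simp add: cong_def)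
  qed
  show ?thesis
    unfolding doubleton_eq_iff square_class_def sq_frac_eq_iff cong_def prod.inject
      shift_127 shift_256
    by blast
qed

lemma EK_pair_eq_iff: "EK_pair k = EK_pair j \<longleftrightarrow> square_class (k + 64) = square_class (j + 64)"
  unfolding EK_pair_def EK_value_True EK_value_False by (rule sq_frac_pair_eq_iff)

lemma card_range_eq_if_same_fibres:
  assumes "\<And>x y. f x = f y \<longleftrightarrow> g x = g y"
  shows "card (range f) = card (range g)"
proof -
  define F where "F z = f (inv g z)" for z
  have F_g: "F (g x) = f x" for x
    using assms f_inv_into_f[of "g x" g UNIV] unfolding F_def by blast
  have "range f = F ` range g" by (auto simp: F_g image_iff)
  moreover have "inj_on F (range g)" by (auto simp: inj_on_def F_g assms)
  ultimately show ?thesis by (simp add: card_image)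
qed

lemma square_class_eq_if_cong:
  assumes "[m = a] (mod 127)" and "[m = b] (mod 2 * 64)"
  shows "square_class m = (a^2 mod 127, {b^2 mod 256, (b + 1)^2 mod 256})"
proof -
  have "[m^2 = a^2] (mod 127)" using assms(1) by (rule cong_pow)
  moreover have "[m^2 = b^2] (mod 4 * 64)" using assms(2) by (rule cong_square_double_modulus)
  moreover have "[(m + 1)^2 = (b + 1)^2] (mod 4 * 64)"
    using cong_add[OF assms(2) cong_refl[of 1]] by (rule cong_square_double_modulus)
  ultimately show ?thesis by (simp add: square_class_def cong_def)
qed

lemma range_square_class:
  "range square_class = (\<lambda>a. a^2 mod 127) ` {0..<127} \<times>
     (\<lambda>b. {b^2 mod 256, (b + 1)^2 mod 256}) ` {0..<128}"
  (is "_ = ?squares \<times> ?pairs")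
proof (intro equalityI subsetI)
  fix z assume "z \<in> range square_class"
  then obtain m where z: "z = square_class m" by blast
  have "square_class m =
      ((m mod 127)^2 mod 127, {(m mod 128)^2 mod 256, (m mod 128 + 1)^2 mod 256})"
    by (rule square_class_eq_if_cong) (simp_all add: cong_def)
  then show "z \<in> ?squares \<times> ?pairs" unfolding z by auto
next
  fix z assume "z \<in> ?squares \<times> ?pairs"
  then obtain a b where z: "z = (a^2 mod 127, {b^2 mod 256, (b + 1)^2 mod 256})" by blast
  define m where "m = a + 127 * (a - b)"
  \<comment> \<open>127 is congruent to -1 mod 128\<close>
  have "m - a = 127 * (a - b)" "m - b = 2 * 64 * (a - b)" by (simp_all add: m_def algebra_simps)
  then have "[m = a] (mod 127)" "[m = b] (mod 2 * 64)"
    by (simp_all only: cong_iff_dvd_diff dvd_triv_left)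
  then show "z \<in> range square_class" using square_class_eq_if_cong z by (metis rangeI)
qed

lemma card_squares_mod_127: "card ((\<lambda>a. a^2 mod 127) ` {0..<127::int}) = 64"
  by code_simp

lemma card_square_pairs_mod_256:
  "card ((\<lambda>b. {b^2 mod 256, (b + 1)^2 mod 256}) ` {0..<128::int}) = 64"
  by code_simp

theorem proposition4p9:
  shows "finite (range EK_pair) \<and> card (range EK_pair) = 4096"
proof -
  have "range (\<lambda>k::int. k + 64) = UNIV" by (rule surjI[of _ "\<lambda>k. k - 64"]) simp
  then have shift: "range (\<lambda>k. square_class (k + 64)) = range square_class"
    using image_image[of square_class "\<lambda>k. k + 64" UNIV] by simp
  have "card (range EK_pair) = card (range (\<lambda>k. square_class (k + 64)))"
    by (rule card_range_eq_if_same_fibres) (rule EK_pair_eq_iff)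
  also have "\<dots> = 64 * 64"
    unfolding shift range_square_class card_cartesian_product card_squares_mod_127
      card_square_pairs_mod_256 ..
  finally have card: "card (range EK_pair) = 4096" by simp
  then have "finite (range EK_pair)" by (intro card_ge_0_finite) simp
  with card show ?thesis by simp
qed

end
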